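(* Let $X\subset Y$ be spaces with $X\in\mathcal F_{\omega_1}(Y)$, let $\alpha\le\omega_1$, and suppose $X\subset H$ for some $H\in\mathcal F_{<\alpha}(Y)$. (i) If $X$ is dense in $Y$ and locally $\mathcal F_\alpha$-hard in $Y$, then $H\setminus X$ is dense in $Y$. (ii) More generally, if $X$ is $\mathcal F_\alpha$-hard in $Y$ at some $y\in Y$, then $y\in\overline{H\setminus X}^Y$.
   Context: All spaces are Tychonoff. $\mathcal F$-Borel hierarchy: $\mathcal F_0(Y)$ closed sets; for $0<\alpha<\omega_1$, $\mathcal F_\alpha(Y)$ = countable unions (odd $\alpha$) or countable intersections (even $\alpha$) of members of $\mathcal F_{<\alpha}(Y)=\bigcup_{\beta<\alpha}\mathcal F_\beta(Y)$ (parity of $\lambda+m$, $\lambda$ limit or 0, is that of $m$); $\mathcal F_{\omega_1}(Y)$ = Suslin-$\mathcal F$ subsets of $Y$; $\mathcal F_{<\omega_1}(Y)=\bigcup_{\beta<\omega_1}\mathcal F_\beta(Y)$. $\mathrm{Compl}(A,Y)$ = least $\alpha\le\omega_1$ with $A\in\mathcal F_\alpha(Y)$. For $y\in Y$: $\mathrm{Compl}_y(X,Y)=\min\{\mathrm{Compl}(\overline U^Y\cap X,Y): U$ neighborhood of $y$ in $Y\}$. $X$ is $\mathcal F_\alpha$-hard in $Y$ at $y$ if $\mathrm{Compl}_y(X,Y)\ge\alpha$, and locally $\mathcal F_\alpha$-hard in $Y$ if it is $\mathcal F_\alpha$-hard in $Y$ at every $x\in X$. *)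

theory Defs
  imports "HOL-Analysis.Analysis"
begin

definition tychonoff_space :: "'a topology \<Rightarrow> bool" where
  "tychonoff_space Y \<longleftrightarrow> completely_regular_space Y \<and> Hausdorff_space Y"

(* Countable ordinals are represented by well-orders on subsets of nat
   (compared with ordLess <o); the ordinal 0 is the empty relation. *)

definition max_elem :: "nat rel \<Rightarrow> nat \<Rightarrow> bool" where
  "max_elem r a \<longleftrightarrow> a \<in> Field r \<and> (\<forall>b\<in>Field r. (b, a) \<in> r)"

(* parity of an ordinal lambda + m (lambda limit or 0) is the parity of m *)
inductive ord_even and ord_odd :: "nat rel \<Rightarrow> bool" where
  even_lim: "Well_order r \<Longrightarrow> \<not> (\<exists>a. max_elem r a) \<Longrightarrow> ord_even r"
| even_suc: "Well_order r \<Longrightarrow> max_elem r a \<Longrightarrow> ord_odd (Restr r (Field r - {a})) \<Longrightarrow> ord_even r"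
| odd_suc: "Well_order r \<Longrightarrow> max_elem r a \<Longrightarrow> ord_even (Restr r (Field r - {a})) \<Longrightarrow> ord_odd r"

inductive Fcl :: "'a topology \<Rightarrow> nat rel \<Rightarrow> 'a set \<Rightarrow> bool" where
  closed: "Well_order r \<Longrightarrow> Field r = {} \<Longrightarrow> closedin Y A \<Longrightarrow> Fcl Y r A"
| union: "ord_odd r \<Longrightarrow> Field r \<noteq> {} \<Longrightarrow> (\<forall>n::nat. \<exists>b::nat rel. (b, r) \<in> ordLess \<and> Fcl Y b (S n))
          \<Longrightarrow> Fcl Y r (\<Union>n::nat. S n)"
| inter: "ord_even r \<Longrightarrow> Field r \<noteq> {} \<Longrightarrow> (\<forall>n::nat. \<exists>b::nat rel. (b, r) \<in> ordLess \<and> Fcl Y b (S n))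
          \<Longrightarrow> Fcl Y r (\<Inter>n::nat. S n)"

(* Ordinals alpha \<le> omega_1: None stands for omega_1, Some r for a countable ordinal *)
definition valid_ord :: "nat rel option \<Rightarrow> bool" where
  "valid_ord \<alpha> \<longleftrightarrow> (case \<alpha> of None \<Rightarrow> True | Some r \<Rightarrow> Well_order r)"

definition ord_below :: "nat rel \<Rightarrow> nat rel option \<Rightarrow> bool" where
  "ord_below b \<alpha> \<longleftrightarrow> (case \<alpha> of None \<Rightarrow> Well_order b | Some r \<Rightarrow> (b, r) \<in> ordLess)"

definition Flt :: "'a topology \<Rightarrow> nat rel option \<Rightarrow> 'a set \<Rightarrow> bool" where
  "Flt Y \<alpha> A \<longleftrightarrow> (\<exists>b. ord_below b \<alpha> \<and> Fcl Y b A)"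

(* Suslin-F subsets of Y (= F_{omega_1}(Y)): results of the Suslin operation on closed sets *)
definition suslinF :: "'a topology \<Rightarrow> 'a set \<Rightarrow> bool" where
  "suslinF Y A \<longleftrightarrow> (\<exists>F :: nat list \<Rightarrow> 'a set. (\<forall>s. closedin Y (F s)) \<and>
      A = (\<Union>\<sigma>::nat \<Rightarrow> nat. \<Inter>n. F (map \<sigma> [0..<n])))"

definition Compl_ge :: "'a topology \<Rightarrow> 'a set \<Rightarrow> nat rel option \<Rightarrow> bool" where
  "Compl_ge Y A \<alpha> \<longleftrightarrow> \<not> Flt Y \<alpha> A"

definition hard_at :: "'a topology \<Rightarrow> 'a set \<Rightarrow> nat rel option \<Rightarrow> 'a \<Rightarrow> bool" where
  "hard_at Y X \<alpha> y \<longleftrightarrow>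
     (\<forall>U. U \<subseteq> topspace Y \<and> (\<exists>W. openin Y W \<and> y \<in> W \<and> W \<subseteq> U)
          \<longrightarrow> Compl_ge Y (Y closure_of U \<inter> X) \<alpha>)"

definition locally_hard :: "'a topology \<Rightarrow> 'a set \<Rightarrow> nat rel option \<Rightarrow> bool" where
  "locally_hard Y X \<alpha> \<longleftrightarrow> (\<forall>x\<in>X. hard_at Y X \<alpha> x)"

end

theory Submission
  imports Defs
begin

text \<open>If a neighbourhood \<open>W\<close> of \<open>y\<close> missed \<open>H - X\<close>, regularity would give an open \<open>U \<ni> y\<close>
  with \<open>closure U \<subseteq> W\<close>; there \<open>X\<close> and \<open>H\<close> agree, so \<open>closure U \<inter> X = closure U \<inter> H\<close> lies in
  \<open>F_{<\<alpha>}(Y)\<close>, the Borel classes being closed under intersection with closed sets. This contradicts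
  hardness at \<open>y\<close>. Part (i) follows by applying this at the points of the dense set \<open>X\<close>.\<close>

lemma Fcl_Int_closedin:
  assumes "Fcl Y r A" "closedin Y C"
  shows "Fcl Y r (C \<inter> A)"
  using assms
proof (induction rule: Fcl.induct)
  case (closed r Y A)
  then show ?case by (simp add: Fcl.closed closedin_Int)
next
  case (union r Y S)
  have "C \<inter> (\<Union>n. S n) = (\<Union>n. C \<inter> S n)" by blast
  moreover have "\<forall>n. \<exists>b. (b, r) \<in> ordLess \<and> Fcl Y b (C \<inter> S n)"
  proof
    fix n
    from union.IH obtain b where "(b, r) \<in> ordLess" "Fcl Y b (C \<inter> S n)"
      using union.prems by meson
    then show "\<exists>b. (b, r) \<in> ordLess \<and> Fcl Y b (C \<inter> S n)" by blast
  qed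
  then have "Fcl Y r (\<Union>n. C \<inter> S n)"
    by (rule Fcl.union[OF union.hyps(1,2)])
  ultimately show ?case by simp
next
  case (inter r Y S)
  have "C \<inter> (\<Inter>n. S n) = (\<Inter>n. C \<inter> S n)" by blast
  moreover have "\<forall>n. \<exists>b. (b, r) \<in> ordLess \<and> Fcl Y b (C \<inter> S n)"
  proof
    fix n
    from inter.IH obtain b where "(b, r) \<in> ordLess" "Fcl Y b (C \<inter> S n)"
      using inter.prems by meson
    then show "\<exists>b. (b, r) \<in> ordLess \<and> Fcl Y b (C \<inter> S n)" by blast
  qed
  then have "Fcl Y r (\<Inter>n. C \<inter> S n)"
    by (rule Fcl.inter[OF inter.hyps(1,2)])
  ultimately show ?case by simp
qed

lemma Flt_Int_closedin:
  assumes "Flt Y \<alpha> A" "closedin Y C"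
  shows "Flt Y \<alpha> (C \<inter> A)"
proof -
  obtain b where "ord_below b \<alpha>" "Fcl Y b A"
    using assms(1) unfolding Flt_def by blast
  then show ?thesis
    unfolding Flt_def using Fcl_Int_closedin[OF _ assms(2)] by blast
qed

lemma hard_at_imp_Int_diff_nonempty:
  assumes "regular_space Y" "Flt Y \<alpha> H" "X \<subseteq> H" "hard_at Y X \<alpha> y"
    and "openin Y W" "y \<in> W"
  shows "W \<inter> (H - X) \<noteq> {}"
proof
  assume disjoint: "W \<inter> (H - X) = {}"
  have "neighbourhood_base_of (closedin Y) Y"
    using assms(1) neighbourhood_base_of_closedin by blast
  then have "\<exists>U V. openin Y U \<and> closedin Y V \<and> y \<in> U \<and> U \<subseteq> V \<and> V \<subseteq> W"
    using assms(5,6) unfolding neighbourhood_base_of by blast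
  then obtain U V where U: "openin Y U" "closedin Y V" "y \<in> U" "U \<subseteq> V" "V \<subseteq> W"
    by blast
  have "Y closure_of U \<subseteq> W"
    using closure_of_minimal[OF U(4,2)] U(5) by (rule order_trans)
  then have "Y closure_of U \<inter> X = Y closure_of U \<inter> H"
    using assms(3) disjoint by blast
  then have "Flt Y \<alpha> (Y closure_of U \<inter> X)"
    using Flt_Int_closedin[OF assms(2) closedin_closure_of] by simp
  moreover have "Compl_ge Y (Y closure_of U \<inter> X) \<alpha>"
  proof -
    have "U \<subseteq> topspace Y \<and> (\<exists>W. openin Y W \<and> y \<in> W \<and> W \<subseteq> U)"
      using U(1,3) openin_subset by blast
    then show ?thesis
      using assms(4) unfolding hard_at_def by simp
  qed
  ultimately show False unfolding Compl_ge_def by blast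
qed

lemma hard_at_imp_in_closure_of_diff:
  assumes "regular_space Y" "Flt Y \<alpha> H" "X \<subseteq> H" "hard_at Y X \<alpha> y" "y \<in> topspace Y"
  shows "y \<in> Y closure_of (H - X)"
proof -
  have "\<exists>z. z \<in> H - X \<and> z \<in> T" if "y \<in> T \<and> openin Y T" for T
    using hard_at_imp_Int_diff_nonempty[OF assms(1-4)] that by blast
  then show ?thesis
    unfolding in_closure_of using assms(5) by blast
qed

lemma locally_hard_imp_subset_closure_of_diff:
  assumes "regular_space Y" "Flt Y \<alpha> H" "X \<subseteq> H" "X \<subseteq> topspace Y"
    and "locally_hard Y X \<alpha>"
  shows "X \<subseteq> Y closure_of (H - X)"
proof
  fix x assume "x \<in> X"
  then have "hard_at Y X \<alpha> x" "x \<in> topspace Y"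
    using assms(4,5) unfolding locally_hard_def by blast+
  then show "x \<in> Y closure_of (H - X)"
    by (rule hard_at_imp_in_closure_of_diff[OF assms(1-3)])
qed

theorem lemma5p11:
  fixes Y :: "'a topology" and X H :: "'a set" and \<alpha> :: "nat rel option"
  assumes "tychonoff_space Y"
    and "X \<subseteq> topspace Y"
    and "suslinF Y X"
    and "valid_ord \<alpha>"
    and "Flt Y \<alpha> H"
    and "X \<subseteq> H"
  shows "(Y closure_of X = topspace Y \<and> locally_hard Y X \<alpha>
            \<longrightarrow> Y closure_of (H - X) = topspace Y)
       \<and> (\<forall>y\<in>topspace Y. hard_at Y X \<alpha> y \<longrightarrow> y \<in> Y closure_of (H - X))"
proof (intro conjI impI ballI)
  have regular: "regular_space Y"
    using assms(1) unfolding tychonoff_space_def by (simp add: completely_regular_imp_regular_space)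
  show "y \<in> Y closure_of (H - X)" if "y \<in> topspace Y" "hard_at Y X \<alpha> y" for y
    using hard_at_imp_in_closure_of_diff[OF regular assms(5,6) that(2,1)] .
  assume dense: "Y closure_of X = topspace Y \<and> locally_hard Y X \<alpha>"
  then have "X \<subseteq> Y closure_of (H - X)"
    by (intro locally_hard_imp_subset_closure_of_diff[OF regular assms(5,6,2)]) simp
  then have "Y closure_of X \<subseteq> Y closure_of (H - X)"
    by (rule closure_of_minimal[OF _ closedin_closure_of])
  then show "Y closure_of (H - X) = topspace Y"
    using dense closure_of_subset_topspace by (metis subset_antisym)
qed

end
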